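(* Let $A$ be an algebra with few automorphisms, with canonical grading $A=\bigoplus_{m\in\mathbb Z^r}A_{(m)}$, and let $A=\bigoplus_{n\in\mathbb Z^t}A_n$ be any algebra grading of $A$. Then there is a group homomorphism $\varphi:\mathbb Z^r\to\mathbb Z^t$ such that $A_n=\bigoplus_{m\in\mathbb Z^r:\ \varphi(m)=n}A_{(m)}$ for all $n\in\mathbb Z^t$.
   Context: $\Bbbk$ is a field of characteristic zero. Rational actions of a torus $(\Bbbk^\times)^r$ on an algebra $A$ by algebra automorphisms correspond bijectively to algebra gradings of $A$ by $\mathbb Z^r$ (homogeneous components being isotypic components of characters). An associative $\Bbbk$-algebra $A$ has few automorphisms if: (i) there is a finite dimensional $\mathrm{Aut}_{\rm Alg}A$-invariant subspace $V\subseteq A$ such that restriction $\mathrm{Aut}_{\rm Alg}A\to GL(V)$ is injective; (ii) the image is an algebraic subgroup of $GL(V)$; (iii) the action of $\mathrm{Aut}_{\rm Alg}A$ on $A$ is rational (union of finite dimensional rational submodules); (iv) the identity component $(\mathrm{Aut}_{\rm Alg}A)_0$ is isomorphic to a torus $(\Bbbk^\times)^r$. Fixing such an isomorphism, the canonical grading $A=\bigoplus_{m\in\mathbb Z^r}A_{(m)}$ is the grading induced by the rational action of $(\mathrm{Aut}_{\rm Alg}A)_0$. *)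

theory Defs
  imports Complex_Main "HOL-Library.FuncSet"
begin

definition is_algebra :: "('k::field_char_0 \<Rightarrow> 'a::ring_1 \<Rightarrow> 'a) \<Rightarrow> bool" where
  "is_algebra smult \<longleftrightarrow> vector_space smult \<and>
     (\<forall>c x y. smult c (x * y) = smult c x * y \<and> smult c (x * y) = x * smult c y)"

definition alg_aut :: "('k::field_char_0 \<Rightarrow> 'a::ring_1 \<Rightarrow> 'a) \<Rightarrow> ('a \<Rightarrow> 'a) \<Rightarrow> bool" where
  "alg_aut smult f \<longleftrightarrow> bij f \<and> Vector_Spaces.linear smult smult f \<and>
     (\<forall>x y. f (x * y) = f x * f y) \<and> f 1 = 1"

definition Aut :: "('k::field_char_0 \<Rightarrow> 'a::ring_1 \<Rightarrow> 'a) \<Rightarrow> ('a \<Rightarrow> 'a) set" where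
  "Aut smult = {f. alg_aut smult f}"

definition fin_dim_subspace :: "('k::field_char_0 \<Rightarrow> 'a::ring_1 \<Rightarrow> 'a) \<Rightarrow> 'a set \<Rightarrow> bool" where
  "fin_dim_subspace smult W \<longleftrightarrow> module.subspace smult W \<and> (\<exists>B. finite B \<and> W = module.span smult B)"

text \<open>Linear functionals on the algebra (every linear functional on a subspace extends to one).\<close>
definition lin_functional :: "('k::field_char_0 \<Rightarrow> 'a::ring_1 \<Rightarrow> 'a) \<Rightarrow> ('a \<Rightarrow> 'k) \<Rightarrow> bool" where
  "lin_functional smult lam \<longleftrightarrow> Vector_Spaces.linear smult (*) lam"

definition GLV :: "('k::field_char_0 \<Rightarrow> 'a::ring_1 \<Rightarrow> 'a) \<Rightarrow> 'a set \<Rightarrow> ('a \<Rightarrow> 'a) set" where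
  "GLV smult V = {g. bij_betw g V V \<and> (\<forall>x\<in>V. \<forall>y\<in>V. g (x + y) = g x + g y)
      \<and> (\<forall>c. \<forall>x\<in>V. g (smult c x) = smult c (g x)) \<and> (\<forall>x. x \<notin> V \<longrightarrow> g x = undefined)}"

text \<open>Polynomial functions on End(V): the algebra generated by the matrix coefficients
  g \<mapsto> lam (g v).\<close>
inductive polyV :: "('k::field_char_0 \<Rightarrow> 'a::ring_1 \<Rightarrow> 'a) \<Rightarrow> 'a set \<Rightarrow> (('a \<Rightarrow> 'a) \<Rightarrow> 'k) \<Rightarrow> bool"
  for smult V where
  pconst: "polyV smult V (\<lambda>g. c)"
| pcoeff: "v \<in> V \<Longrightarrow> lin_functional smult lam \<Longrightarrow> polyV smult V (\<lambda>g. lam (g v))"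
| padd: "polyV smult V p \<Longrightarrow> polyV smult V q \<Longrightarrow> polyV smult V (\<lambda>g. p g + q g)"
| pmult: "polyV smult V p \<Longrightarrow> polyV smult V q \<Longrightarrow> polyV smult V (\<lambda>g. p g * q g)"

text \<open>Regular functions on GL(V): the algebra generated by the matrix coefficients of g
  and of g inverse (coordinate ring of GL(V)).\<close>
inductive regV :: "('k::field_char_0 \<Rightarrow> 'a::ring_1 \<Rightarrow> 'a) \<Rightarrow> 'a set \<Rightarrow> (('a \<Rightarrow> 'a) \<Rightarrow> 'k) \<Rightarrow> bool"
  for smult V where
  rconst: "regV smult V (\<lambda>g. c)"
| rcoeff: "v \<in> V \<Longrightarrow> lin_functional smult lam \<Longrightarrow> regV smult V (\<lambda>g. lam (g v))"
| rcoeff_inv: "v \<in> V \<Longrightarrow> lin_functional smult lam \<Longrightarrow> regV smult V (\<lambda>g. lam (inv_into V g v))"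
| radd: "regV smult V p \<Longrightarrow> regV smult V q \<Longrightarrow> regV smult V (\<lambda>g. p g + q g)"
| rmult: "regV smult V p \<Longrightarrow> regV smult V q \<Longrightarrow> regV smult V (\<lambda>g. p g * q g)"

definition zariski_closed :: "('k::field_char_0 \<Rightarrow> 'a::ring_1 \<Rightarrow> 'a) \<Rightarrow> 'a set \<Rightarrow> ('a \<Rightarrow> 'a) set \<Rightarrow> bool" where
  "zariski_closed smult V C \<longleftrightarrow>
     (\<exists>P. (\<forall>p\<in>P. polyV smult V p) \<and> C = {g \<in> GLV smult V. \<forall>p\<in>P. p g = (0::'k)})"

definition zariski_connected :: "('k::field_char_0 \<Rightarrow> 'a::ring_1 \<Rightarrow> 'a) \<Rightarrow> 'a set \<Rightarrow> ('a \<Rightarrow> 'a) set \<Rightarrow> bool" where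
  "zariski_connected smult V S \<longleftrightarrow>
     \<not> (\<exists>C1 C2. zariski_closed smult V C1 \<and> zariski_closed smult V C2 \<and>
          S \<subseteq> C1 \<union> C2 \<and> S \<inter> C1 \<noteq> {} \<and> S \<inter> C2 \<noteq> {} \<and> S \<inter> C1 \<inter> C2 = {})"

definition AutV :: "('k::field_char_0 \<Rightarrow> 'a::ring_1 \<Rightarrow> 'a) \<Rightarrow> 'a set \<Rightarrow> ('a \<Rightarrow> 'a) set" where
  "AutV smult V = (\<lambda>f. restrict f V) ` Aut smult"

text \<open>Identity component (connected component of the identity, Zariski topology) of the image.\<close>
definition AutV0 :: "('k::field_char_0 \<Rightarrow> 'a::ring_1 \<Rightarrow> 'a) \<Rightarrow> 'a set \<Rightarrow> ('a \<Rightarrow> 'a) set" where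
  "AutV0 smult V = \<Union>{S. S \<subseteq> AutV smult V \<and> restrict id V \<in> S \<and> zariski_connected smult V S}"

definition Aut0 :: "('k::field_char_0 \<Rightarrow> 'a::ring_1 \<Rightarrow> 'a) \<Rightarrow> 'a set \<Rightarrow> ('a \<Rightarrow> 'a) set" where
  "Aut0 smult V = {f \<in> Aut smult. restrict f V \<in> AutV0 smult V}"

definition few_aut_V :: "('k::field_char_0 \<Rightarrow> 'a::ring_1 \<Rightarrow> 'a) \<Rightarrow> 'a set \<Rightarrow> bool" where
  "few_aut_V smult V \<longleftrightarrow>
     \<comment> \<open>(i)\<close>
     fin_dim_subspace smult V \<and> (\<forall>f\<in>Aut smult. f ` V \<subseteq> V) \<and>
     inj_on (\<lambda>f. restrict f V) (Aut smult) \<and>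
     \<comment> \<open>(ii): the image is an algebraic subgroup (it is a subgroup; closedness)\<close>
     zariski_closed smult V (AutV smult V) \<and>
     \<comment> \<open>(iii): A is a union of finite-dimensional rational submodules\<close>
     (\<forall>a. \<exists>W. a \<in> W \<and> fin_dim_subspace smult W \<and> (\<forall>f\<in>Aut smult. f ` W \<subseteq> W) \<and>
        (\<forall>w\<in>W. \<forall>mu. lin_functional smult mu \<longrightarrow>
           (\<exists>q. regV smult V q \<and> (\<forall>f\<in>Aut smult. mu (f w) = q (restrict f V)))))"

text \<open>Z^r encoded as integer sequences vanishing from index r on.\<close>
definition Zvec :: "nat \<Rightarrow> (nat \<Rightarrow> int) set" where
  "Zvec r = {m. \<forall>i\<ge>r. m i = 0}"

text \<open>The torus (k^x)^r, encoded as sequences with nonzero entries below r and 1 from r on.\<close>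
definition Tor :: "nat \<Rightarrow> (nat \<Rightarrow> 'k::field) set" where
  "Tor r = {t. (\<forall>i<r. t i \<noteq> 0) \<and> (\<forall>i\<ge>r. t i = 1)}"

definition chr :: "nat \<Rightarrow> (nat \<Rightarrow> int) \<Rightarrow> (nat \<Rightarrow> 'k::field) \<Rightarrow> 'k" where
  "chr r m t = (\<Prod>i<r. t i powi m i)"

definition laurent_fun :: "nat \<Rightarrow> ((nat \<Rightarrow> 'k::field) \<Rightarrow> 'k) \<Rightarrow> bool" where
  "laurent_fun r h \<longleftrightarrow> (\<exists>M c. finite M \<and> M \<subseteq> Zvec r \<and>
      (\<forall>t\<in>Tor r. h t = (\<Sum>m\<in>M. c m * chr r m t)))"

text \<open>tau is an isomorphism of algebraic groups from (k^x)^r onto the identity component.\<close>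
definition torus_iso :: "('k::field_char_0 \<Rightarrow> 'a::ring_1 \<Rightarrow> 'a) \<Rightarrow> 'a set \<Rightarrow> nat \<Rightarrow>
    ((nat \<Rightarrow> 'k) \<Rightarrow> ('a \<Rightarrow> 'a)) \<Rightarrow> bool" where
  "torus_iso smult V r tau \<longleftrightarrow>
     bij_betw tau (Tor r) (Aut0 smult V) \<and>
     (\<forall>s\<in>Tor r. \<forall>t\<in>Tor r. tau (\<lambda>i. s i * t i) = tau s \<circ> tau t) \<and>
     (\<forall>v\<in>V. \<forall>lam. lin_functional smult lam \<longrightarrow> laurent_fun r (\<lambda>t. lam (tau t v))) \<and>
     (\<forall>i<r. \<exists>q. regV smult V q \<and> (\<forall>t\<in>Tor r. t i = q (restrict (tau t) V)))"

definition canon_comp :: "('k::field_char_0 \<Rightarrow> 'a::ring_1 \<Rightarrow> 'a) \<Rightarrow> nat \<Rightarrow>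
    ((nat \<Rightarrow> 'k) \<Rightarrow> ('a \<Rightarrow> 'a)) \<Rightarrow> (nat \<Rightarrow> int) \<Rightarrow> 'a set" where
  "canon_comp smult r tau m = {a. \<forall>t\<in>Tor r. tau t a = smult (chr r m t) a}"

definition is_direct_sum :: "('k::field_char_0 \<Rightarrow> 'a::ring_1 \<Rightarrow> 'a) \<Rightarrow> 'a set \<Rightarrow>
    ('i \<Rightarrow> 'a set) \<Rightarrow> 'i set \<Rightarrow> bool" where
  "is_direct_sum smult X F I \<longleftrightarrow>
     X = module.span smult (\<Union>i\<in>I. F i) \<and>
     (\<forall>J x. finite J \<longrightarrow> J \<subseteq> I \<longrightarrow> (\<forall>i\<in>J. x i \<in> F i) \<longrightarrow> (\<Sum>i\<in>J. x i) = 0 \<longrightarrow> (\<forall>i\<in>J. x i = 0))"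

definition is_grading :: "('k::field_char_0 \<Rightarrow> 'a::ring_1 \<Rightarrow> 'a) \<Rightarrow> nat \<Rightarrow> ((nat \<Rightarrow> int) \<Rightarrow> 'a set) \<Rightarrow> bool" where
  "is_grading smult t Ag \<longleftrightarrow>
     (\<forall>n\<in>Zvec t. module.subspace smult (Ag n)) \<and>
     is_direct_sum smult UNIV Ag (Zvec t) \<and>
     (\<forall>n\<in>Zvec t. \<forall>n'\<in>Zvec t. \<forall>x\<in>Ag n. \<forall>y\<in>Ag n'. x * y \<in> Ag (\<lambda>i. n i + n' i))"

definition group_hom_Z :: "nat \<Rightarrow> nat \<Rightarrow> ((nat \<Rightarrow> int) \<Rightarrow> (nat \<Rightarrow> int)) \<Rightarrow> bool" where
  "group_hom_Z r t phi \<longleftrightarrow> phi \<in> Zvec r \<rightarrow> Zvec t \<and>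
     (\<forall>m\<in>Zvec r. \<forall>m'\<in>Zvec r. phi (\<lambda>i. m i + m' i) = (\<lambda>i. phi m i + phi m' i))"

end

theory Submission
  imports Defs "HOL-Computational_Algebra.Polynomial"
begin

(*
  A Z^t-grading of A is the same thing as a rational action of the torus (k^x)^t, in which s acts
  on A_n by the character s^n.  Every automorphism in this action lies in the identity component
  Aut_0 A = tau((k^x)^r): the line from 1 to s in (k^x)^t is mapped onto a Zariski-connected set,
  because polynomial functions on GL(V) pull back to Laurent polynomials along the action.  Hence
  the action factors through a homomorphism psi : (k^x)^t -> (k^x)^r whose coordinates are
  multiplicative Laurent polynomials, i.e. monomials s^(Phi_i).  For the linear map phi with
  psi(s)^m = s^(phi m), every canonical component A_(m) is contained in A_(phi m), and since both
  families decompose A as a direct sum, A_n is the direct sum of the A_(m) with phi m = n.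
  Linear independence of distinct characters (Dedekind's lemma) is what compares expansions
  throughout.
*)

section \<open>The torus and its characters\<close>

definition torus_mult :: "(nat \<Rightarrow> 'k::field) \<Rightarrow> (nat \<Rightarrow> 'k) \<Rightarrow> nat \<Rightarrow> 'k" where
  "torus_mult s u = (\<lambda>i. s i * u i)"

definition torus_inverse :: "(nat \<Rightarrow> 'k::field) \<Rightarrow> nat \<Rightarrow> 'k" where
  "torus_inverse s = (\<lambda>i. inverse (s i))"

definition torus_one :: "nat \<Rightarrow> 'k::field" where
  "torus_one = (\<lambda>i. 1)"

definition zvec_add :: "(nat \<Rightarrow> int) \<Rightarrow> (nat \<Rightarrow> int) \<Rightarrow> nat \<Rightarrow> int" where
  "zvec_add m m' = (\<lambda>i. m i + m' i)"

definition zvec_uminus :: "(nat \<Rightarrow> int) \<Rightarrow> nat \<Rightarrow> int" where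
  "zvec_uminus m = (\<lambda>i. - m i)"

lemma Tor_torus_mult: "s \<in> Tor r \<Longrightarrow> u \<in> Tor r \<Longrightarrow> torus_mult s u \<in> Tor r"
  by (auto simp: Tor_def torus_mult_def)

lemma Tor_torus_inverse: "s \<in> Tor r \<Longrightarrow> torus_inverse s \<in> Tor r"
  by (auto simp: Tor_def torus_inverse_def)

lemma Tor_torus_one: "torus_one \<in> Tor r"
  by (auto simp: Tor_def torus_one_def)

lemma Zvec_zvec_add: "m \<in> Zvec r \<Longrightarrow> m' \<in> Zvec r \<Longrightarrow> zvec_add m m' \<in> Zvec r"
  by (auto simp: Zvec_def zvec_add_def)

lemma Zvec_zvec_uminus: "m \<in> Zvec r \<Longrightarrow> zvec_uminus m \<in> Zvec r"
  by (auto simp: Zvec_def zvec_uminus_def)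

lemma torus_mult_inverse_right: "s \<in> Tor r \<Longrightarrow> torus_mult s (torus_inverse s) = torus_one"
  unfolding Tor_def torus_mult_def torus_inverse_def torus_one_def fun_eq_iff
  by (metis (mono_tags, lifting) mem_Collect_eq not_le right_inverse inverse_1 mult_1)

lemma torus_mult_one_left [simp]: "torus_mult torus_one s = s"
  by (simp add: torus_mult_def torus_one_def)

lemma chr_torus_mult: "chr r m (torus_mult s u) = chr r m s * chr r m u"
  by (simp add: chr_def torus_mult_def power_int_mult_distrib prod.distrib)

lemma chr_zvec_add: "s \<in> Tor r \<Longrightarrow> chr r (zvec_add m m') s = chr r m s * chr r m' s"
  by (simp add: chr_def zvec_add_def Tor_def power_int_add prod.distrib)

lemma chr_torus_inverse: "chr r m (torus_inverse s) = chr r (zvec_uminus m) s"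
  by (simp add: chr_def torus_inverse_def zvec_uminus_def power_int_inverse power_int_minus
      prod_inversef)

lemma chr_torus_one [simp]: "chr r m torus_one = 1"
  by (simp add: chr_def torus_one_def)

lemma power_int_sum:
  fixes x :: "'k::field"
  assumes "x \<noteq> 0"
  shows "x powi (\<Sum>i\<in>I. f i) = (\<Prod>i\<in>I. x powi f i)"
  using assms by (induction I rule: infinite_finite_induct) (auto simp: power_int_add)

lemma prod_power_int_distrib:
  fixes f :: "'i \<Rightarrow> 'k::field"
  shows "(\<Prod>i\<in>I. f i) powi k = (\<Prod>i\<in>I. f i powi k)"
  by (induction I rule: infinite_finite_induct) (auto simp: power_int_mult_distrib)

definition zvec_linear_map :: "nat \<Rightarrow> (nat \<Rightarrow> nat \<Rightarrow> int) \<Rightarrow> (nat \<Rightarrow> int) \<Rightarrow> nat \<Rightarrow> int" where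
  "zvec_linear_map r Phi m = (\<lambda>j. \<Sum>i<r. m i * Phi i j)"

lemma group_hom_Z_zvec_linear_map:
  assumes "\<And>i. i < r \<Longrightarrow> Phi i \<in> Zvec t"
  shows "group_hom_Z r t (zvec_linear_map r Phi)"
  using assms
  by (auto simp: group_hom_Z_def zvec_linear_map_def Zvec_def distrib_right sum.distrib)

lemma chr_chr_zvec_linear_map:
  assumes "s \<in> Tor t"
  shows "chr r m (\<lambda>i. chr t (Phi i) s) = chr t (zvec_linear_map r Phi m) s"
proof -
  have "chr r m (\<lambda>i. chr t (Phi i) s) = (\<Prod>i<r. \<Prod>j<t. s j powi (m i * Phi i j))"
    by (simp add: chr_def prod_power_int_distrib power_int_mult[symmetric] mult.commute)
  also have "\<dots> = (\<Prod>j<t. \<Prod>i<r. s j powi (m i * Phi i j))"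
    by (rule prod.swap)
  also have "\<dots> = chr t (zvec_linear_map r Phi m) s"
    using assms by (auto simp: chr_def zvec_linear_map_def Tor_def power_int_sum intro!: prod.cong)
  finally show ?thesis .
qed

lemma power_int_two_inj:
  assumes "(2::'k::field_char_0) powi a = 2 powi b"
  shows "a = b"
proof -
  have "(2::'k) powi n = of_rat (2 powi n)" for n
    by (simp add: power_int_def of_rat_power of_rat_inverse of_rat_divide)
  with assms have "(2::rat) powi a = 2 powi b" by simp
  moreover have "(1::rat) < 2" by simp
  ultimately show ?thesis
    using power_int_strict_increasing[of a b "2::rat"] power_int_strict_increasing[of b a "2::rat"]
    by (metis less_irrefl linorder_neqE)
qed

text \<open>Distinct exponents are separated by a point with a single coordinate 2, all others 1.\<close>
lemma chr_separates:
  assumes "m \<in> Zvec r" "m' \<in> Zvec r" "m \<noteq> m'"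
  shows "\<exists>u\<in>Tor r. chr r m u \<noteq> (chr r m' u :: 'k::field_char_0)"
proof -
  obtain j where j: "m j \<noteq> m' j" using assms by auto
  with assms have "j < r" by (auto simp: Zvec_def)
  define u :: "nat \<Rightarrow> 'k" where "u = (\<lambda>i. if i = j then 2 else 1)"
  have "u \<in> Tor r" using \<open>j < r\<close> by (auto simp: u_def Tor_def)
  have chr_u: "chr r k u = 2 powi k j" for k
  proof -
    have "chr r k u = (\<Prod>i<r. if i = j then 2 powi k j else 1)"
      unfolding chr_def u_def by (rule prod.cong) auto
    also have "\<dots> = 2 powi k j" using \<open>j < r\<close> by (simp add: prod.delta)
    finally show ?thesis .
  qed
  from j have "chr r m u \<noteq> chr r m' u"
    unfolding chr_u using power_int_two_inj by blast
  with \<open>u \<in> Tor r\<close> show ?thesis by blast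
qed

lemma (in vector_space) characters_independent:
  assumes "finite M"
    and distinct: "\<forall>m\<in>M. \<forall>m'\<in>M. m \<noteq> m' \<longrightarrow> (\<exists>u\<in>Tor r. chr r m (u :: nat \<Rightarrow> 'a) \<noteq> chr r m' u)"
    and zero: "\<forall>s\<in>Tor r. (\<Sum>m\<in>M. chr r m s *s w m) = 0"
  shows "\<forall>m\<in>M. w m = 0"
  using assms
proof (induction M arbitrary: w rule: finite_induct)
  case empty
  then show ?case by simp
next
  case (insert m0 M)
  have rest: "w m1 = 0" if m1: "m1 \<in> M" for m1
  proof -
    from m1 insert.hyps(2) insert.prems(1) obtain u :: "nat \<Rightarrow> 'a"
      where u: "u \<in> Tor r" "chr r m0 u \<noteq> chr r m1 u"
      by (metis insertI1 insertI2)
    \<comment> \<open>translating by u and subtracting chr m0 u times the relation eliminates m0\<close>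
    define w' where "w' m = (chr r m u - chr r m0 u) *s w m" for m
    have "(\<Sum>m\<in>M. chr r m s *s w' m) = 0" if s: "s \<in> Tor r" for s
    proof -
      have "(\<Sum>m\<in>M. chr r m s *s w' m) = (\<Sum>m\<in>insert m0 M. chr r m s *s w' m)"
        using insert.hyps by (simp add: w'_def)
      also have "\<dots> = (\<Sum>m\<in>insert m0 M. chr r m (torus_mult u s) *s w m)
                      - chr r m0 u *s (\<Sum>m\<in>insert m0 M. chr r m s *s w m)"
        by (simp add: w'_def chr_torus_mult scale_sum_right sum_subtractf[symmetric]
            scale_left_diff_distrib algebra_simps)
      also have "\<dots> = 0"
        using insert.prems(2) s Tor_torus_mult[OF u(1) s] by simp
      finally show ?thesis .
    qed
    with insert.IH insert.prems(1) have "w' m1 = 0" using m1 by blast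
    with u show "w m1 = 0" by (simp add: w'_def)
  qed
  have "(\<Sum>m\<in>insert m0 M. chr r m torus_one *s w m) = 0"
    using insert.prems(2) Tor_torus_one by blast
  with rest insert.hyps have "w m0 = 0" by simp
  with rest show ?case by simp
qed

lemma vector_space_field: "vector_space ((*) :: 'k::field \<Rightarrow> 'k \<Rightarrow> 'k)"
  by unfold_locales (auto simp: algebra_simps)

lemma chr_independent:
  fixes scale :: "'k::field_char_0 \<Rightarrow> 'b::ab_group_add \<Rightarrow> 'b"
  assumes "vector_space scale" "finite M" "M \<subseteq> Zvec r"
    and "\<forall>s\<in>Tor r. (\<Sum>m\<in>M. scale (chr r m s) (w m)) = 0" "m \<in> M"
  shows "w m = 0"
  using vector_space.characters_independent[OF assms(1,2) _ assms(4)] assms(3,5) chr_separates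
  by (metis subsetD)

section \<open>Laurent polynomial functions on the torus\<close>

lemma laurent_fun_image_sum:
  fixes h :: "(nat \<Rightarrow> 'k::field) \<Rightarrow> 'k" and e :: "'i \<Rightarrow> nat \<Rightarrow> int"
  assumes "finite I" "e ` I \<subseteq> Zvec r" "\<forall>s\<in>Tor r. h s = (\<Sum>i\<in>I. c i * chr r (e i) s)"
  shows "laurent_fun r h"
  unfolding laurent_fun_def
proof (intro exI conjI)
  show "finite (e ` I)" "e ` I \<subseteq> Zvec r" using assms by simp_all
  show "\<forall>s\<in>Tor r. h s = (\<Sum>m\<in>e ` I. (\<Sum>i\<in>{i\<in>I. e i = m}. c i) * chr r m s)"
  proof
    fix s :: "nat \<Rightarrow> 'k" assume "s \<in> Tor r"
    with assms(3) have "h s = (\<Sum>i\<in>I. c i * chr r (e i) s)" by blast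
    also have "\<dots> = (\<Sum>m\<in>e ` I. \<Sum>i\<in>{i\<in>I. e i = m}. c i * chr r (e i) s)"
      by (rule sum.image_gen[OF assms(1)])
    also have "\<dots> = (\<Sum>m\<in>e ` I. (\<Sum>i\<in>{i\<in>I. e i = m}. c i) * chr r m s)"
      by (rule sum.cong) (auto simp: sum_distrib_right)
    finally show "h s = \<dots>" .
  qed
qed

lemma laurent_fun_cong:
  "laurent_fun r h \<Longrightarrow> (\<And>s. s \<in> Tor r \<Longrightarrow> h s = h' s) \<Longrightarrow> laurent_fun r h'"
  unfolding laurent_fun_def by metis

lemma laurent_fun_const: "laurent_fun r (\<lambda>s. c)"
  by (rule laurent_fun_image_sum[of "{()}" "\<lambda>_ i. 0" r _ "\<lambda>_. c"])
     (auto simp: Zvec_def chr_def)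

lemma laurent_fun_add:
  assumes "laurent_fun r f" "laurent_fun r g"
  shows "laurent_fun r (\<lambda>s. f s + g s)"
proof -
  obtain M c where M: "finite M" "M \<subseteq> Zvec r" "\<forall>s\<in>Tor r. f s = (\<Sum>m\<in>M. c m * chr r m s)"
    using assms(1) unfolding laurent_fun_def by blast
  obtain M' c' where M': "finite M'" "M' \<subseteq> Zvec r" "\<forall>s\<in>Tor r. g s = (\<Sum>m\<in>M'. c' m * chr r m s)"
    using assms(2) unfolding laurent_fun_def by blast
  show ?thesis
    by (rule laurent_fun_image_sum[of "M <+> M'" "case_sum id id" r _ "case_sum c c'"])
       (use M M' in \<open>auto simp: sum.Plus\<close>)
qed

lemma laurent_fun_mult:
  fixes f g :: "(nat \<Rightarrow> 'k::field) \<Rightarrow> 'k"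
  assumes "laurent_fun r f" "laurent_fun r g"
  shows "laurent_fun r (\<lambda>s. f s * g s)"
proof -
  obtain M c where M: "finite M" "M \<subseteq> Zvec r" "\<forall>s\<in>Tor r. f s = (\<Sum>m\<in>M. c m * chr r m s)"
    using assms(1) unfolding laurent_fun_def by blast
  obtain M' c' where M': "finite M'" "M' \<subseteq> Zvec r" "\<forall>s\<in>Tor r. g s = (\<Sum>m\<in>M'. c' m * chr r m s)"
    using assms(2) unfolding laurent_fun_def by blast
  show ?thesis
  proof (rule laurent_fun_image_sum[of "M \<times> M'" "case_prod zvec_add" r _ "\<lambda>(m, m'). c m * c' m'"])
    show "finite (M \<times> M')" "case_prod zvec_add ` (M \<times> M') \<subseteq> Zvec r"
      using M M' by (auto intro: Zvec_zvec_add)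
    show "\<forall>s\<in>Tor r. f s * g s = (\<Sum>i\<in>M \<times> M'. (case i of (m, m') \<Rightarrow> c m * c' m') *
             chr r (case_prod zvec_add i) s)"
    proof
      fix s :: "nat \<Rightarrow> 'k" assume s: "s \<in> Tor r"
      have "f s * g s = (\<Sum>(m, m')\<in>M \<times> M'. (c m * chr r m s) * (c' m' * chr r m' s))"
        using M M' s by (simp add: sum_product sum.cartesian_product)
      also have "\<dots> = (\<Sum>i\<in>M \<times> M'. (case i of (m, m') \<Rightarrow> c m * c' m') *
             chr r (case_prod zvec_add i) s)"
        by (rule sum.cong) (auto simp: chr_zvec_add[OF s] algebra_simps)
      finally show "f s * g s = \<dots>" .
    qed
  qed
qed

lemma laurent_fun_torus_inverse:
  assumes "laurent_fun r f"
  shows "laurent_fun r (\<lambda>s. f (torus_inverse s))"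
proof -
  obtain M c where M: "finite M" "M \<subseteq> Zvec r" "\<forall>s\<in>Tor r. f s = (\<Sum>m\<in>M. c m * chr r m s)"
    using assms unfolding laurent_fun_def by blast
  show ?thesis
    by (rule laurent_fun_image_sum[of M zvec_uminus r _ c])
       (use M in \<open>auto simp: chr_torus_inverse Tor_torus_inverse intro: Zvec_zvec_uminus\<close>)
qed

lemma multiplicative_laurent_fun_is_chr:
  fixes h :: "(nat \<Rightarrow> 'k::field_char_0) \<Rightarrow> 'k"
  assumes "laurent_fun r h" "\<forall>s\<in>Tor r. \<forall>u\<in>Tor r. h (torus_mult s u) = h s * h u"
    and "h torus_one = 1"
  shows "\<exists>m\<in>Zvec r. \<forall>s\<in>Tor r. h s = chr r m s"
proof -
  obtain M c where M: "finite M" "M \<subseteq> Zvec r" "\<forall>s\<in>Tor r. h s = (\<Sum>m\<in>M. c m * chr r m s)"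
    using assms(1) unfolding laurent_fun_def by blast
  from M(3) Tor_torus_one assms(3) have "(\<Sum>m\<in>M. c m) = 1" by force
  then obtain m0 where m0: "m0 \<in> M" "c m0 \<noteq> 0"
    by (metis (mono_tags, lifting) sum.neutral zero_neq_one)
  have "h u = chr r m0 u" if u: "u \<in> Tor r" for u
  proof -
    have "(\<Sum>m\<in>M. chr r m s * (c m * chr r m u - h u * c m)) = 0" if s: "s \<in> Tor r" for s
    proof -
      have "(\<Sum>m\<in>M. chr r m s * (c m * chr r m u - h u * c m)) =
            (\<Sum>m\<in>M. c m * chr r m (torus_mult u s)) - h u * (\<Sum>m\<in>M. c m * chr r m s)"
        by (simp add: sum_subtractf sum_distrib_left chr_torus_mult algebra_simps)
      also have "\<dots> = h (torus_mult u s) - h u * h s"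
        using M(3) s Tor_torus_mult[OF u s] by simp
      finally show ?thesis using assms(2) u s by simp
    qed
    then have "c m0 * chr r m0 u - h u * c m0 = 0"
      using chr_independent[of "(*)" M r "\<lambda>m. c m * chr r m u - h u * c m" m0]
        M(1,2) m0(1) vector_space_field by blast
    with m0(2) show ?thesis by (simp add: mult.commute)
  qed
  with m0(1) M(2) show ?thesis by blast
qed

definition vector_laurent_fun ::
    "('k::field \<Rightarrow> 'b \<Rightarrow> 'b) \<Rightarrow> nat \<Rightarrow> ((nat \<Rightarrow> 'k) \<Rightarrow> 'b::ab_group_add) \<Rightarrow> bool" where
  "vector_laurent_fun scale r F \<longleftrightarrow> (\<exists>M w. finite M \<and> M \<subseteq> Zvec r \<and>
      (\<forall>s\<in>Tor r. F s = (\<Sum>m\<in>M. scale (chr r m s) (w m))))"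

lemma vector_laurent_fun_cong:
  "vector_laurent_fun scale r F \<Longrightarrow> (\<And>s. s \<in> Tor r \<Longrightarrow> F s = F' s) \<Longrightarrow>
    vector_laurent_fun scale r F'"
  unfolding vector_laurent_fun_def by metis

context vector_space
begin

lemma vector_laurent_fun_image_sum:
  fixes F :: "(nat \<Rightarrow> 'a) \<Rightarrow> 'b" and e :: "'i \<Rightarrow> nat \<Rightarrow> int"
  assumes "finite I" "e ` I \<subseteq> Zvec r" "\<forall>s\<in>Tor r. F s = (\<Sum>i\<in>I. chr r (e i) s *s w i)"
  shows "vector_laurent_fun scale r F"
  unfolding vector_laurent_fun_def
proof (intro exI conjI)
  show "finite (e ` I)" "e ` I \<subseteq> Zvec r" using assms by simp_all
  show "\<forall>s\<in>Tor r. F s = (\<Sum>m\<in>e ` I. chr r m s *s (\<Sum>i\<in>{i\<in>I. e i = m}. w i))"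
  proof
    fix s :: "nat \<Rightarrow> 'a" assume "s \<in> Tor r"
    with assms(3) have "F s = (\<Sum>i\<in>I. chr r (e i) s *s w i)" by blast
    also have "\<dots> = (\<Sum>m\<in>e ` I. \<Sum>i\<in>{i\<in>I. e i = m}. chr r (e i) s *s w i)"
      by (rule sum.image_gen[OF assms(1)])
    also have "\<dots> = (\<Sum>m\<in>e ` I. chr r m s *s (\<Sum>i\<in>{i\<in>I. e i = m}. w i))"
      by (rule sum.cong) (auto simp: scale_sum_right)
    finally show "F s = \<dots>" .
  qed
qed

lemma vector_laurent_fun_zero: "vector_laurent_fun scale r (\<lambda>s. 0)"
  unfolding vector_laurent_fun_def by (rule exI[of _ "{}"]) auto

lemma vector_laurent_fun_add:
  assumes "vector_laurent_fun scale r F" "vector_laurent_fun scale r G"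
  shows "vector_laurent_fun scale r (\<lambda>s. F s + G s)"
proof -
  obtain M w where M: "finite M" "M \<subseteq> Zvec r" "\<forall>s\<in>Tor r. F s = (\<Sum>m\<in>M. chr r m s *s w m)"
    using assms(1) unfolding vector_laurent_fun_def by blast
  obtain M' w' where M': "finite M'" "M' \<subseteq> Zvec r" "\<forall>s\<in>Tor r. G s = (\<Sum>m\<in>M'. chr r m s *s w' m)"
    using assms(2) unfolding vector_laurent_fun_def by blast
  show ?thesis
    by (rule vector_laurent_fun_image_sum[of "M <+> M'" "case_sum id id" r _ "case_sum w w'"])
       (use M M' in \<open>auto simp: sum.Plus\<close>)
qed

lemma vector_laurent_fun_sum:
  assumes "finite I" "\<And>i. i \<in> I \<Longrightarrow> vector_laurent_fun scale r (F i)"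
  shows "vector_laurent_fun scale r (\<lambda>s. \<Sum>i\<in>I. F i s)"
  using assms
  by (induction I rule: finite_induct) (auto intro: vector_laurent_fun_zero vector_laurent_fun_add)

lemma vector_laurent_fun_scale:
  assumes "laurent_fun r h"
  shows "vector_laurent_fun scale r (\<lambda>s. h s *s b)"
proof -
  obtain M c where M: "finite M" "M \<subseteq> Zvec r" "\<forall>s\<in>Tor r. h s = (\<Sum>m\<in>M. c m * chr r m s)"
    using assms unfolding laurent_fun_def by blast
  show ?thesis unfolding vector_laurent_fun_def
  proof (intro exI conjI)
    show "\<forall>s\<in>Tor r. h s *s b = (\<Sum>m\<in>M. chr r m s *s (c m *s b))"
      using M by (auto simp: scale_sum_left mult.commute)
  qed (use M in auto)
qed

end

lemma laurent_fun_regV: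
  fixes G :: "(nat \<Rightarrow> 'k::field_char_0) \<Rightarrow> 'a::ring_1 \<Rightarrow> 'a" and smult :: "'k \<Rightarrow> 'a \<Rightarrow> 'a"
  assumes "regV smult V q"
    and coeff: "\<And>v lam. v \<in> V \<Longrightarrow> lin_functional smult lam \<Longrightarrow> laurent_fun n (\<lambda>s. lam (G s v))"
    and coeff_inv: "\<And>v lam. v \<in> V \<Longrightarrow> lin_functional smult lam \<Longrightarrow>
              laurent_fun n (\<lambda>s. lam (inv_into V (restrict (G s) V) v))"
  shows "laurent_fun n (\<lambda>s. q (restrict (G s) V))"
  using assms(1)
proof (induction rule: regV.induct)
  case (rconst c)
  show ?case by (rule laurent_fun_const)
next
  case (rcoeff v lam)
  then show ?case using coeff[of v lam] by simp
next
  case (rcoeff_inv v lam)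
  then show ?case using coeff_inv[of v lam] by (simp del: restrict_apply)
next
  case (radd p q)
  from radd.IH show ?case by (rule laurent_fun_add)
next
  case (rmult p q)
  from rmult.IH show ?case by (rule laurent_fun_mult)
qed

lemma polyV_imp_regV: "polyV scale V p \<Longrightarrow> regV scale V p"
  by (induction rule: polyV.induct) (auto intro: regV.intros)

lemma inv_into_restrict_eq:
  assumes "inj f" "v \<in> V" "g v \<in> V" "f (g v) = v"
  shows "inv_into V (restrict f V) v = g v"
proof (rule inv_into_f_eq)
  show "inj_on (restrict f V) V" using assms(1) by (auto simp: inj_on_def inj_def)
qed (use assms in auto)

section \<open>Lines through the identity of the torus\<close>

definition torus_line :: "nat \<Rightarrow> (nat \<Rightarrow> 'k::field) \<Rightarrow> 'k \<Rightarrow> nat \<Rightarrow> 'k" where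
  "torus_line n s x = (\<lambda>j. if j < n then 1 + x * (s j - 1) else 1)"

definition torus_line_denom :: "nat \<Rightarrow> (nat \<Rightarrow> 'k::field) \<Rightarrow> 'k poly" where
  "torus_line_denom n s = (\<Prod>j<n. [:1, s j - 1:])"

lemma poly_torus_line_denom: "poly (torus_line_denom n s) x = (\<Prod>j<n. 1 + x * (s j - 1))"
  by (simp add: torus_line_denom_def poly_prod)

lemma torus_line_denom_nonzero: "torus_line_denom n s \<noteq> 0"
  using poly_torus_line_denom[of n s 0] by auto

lemma Tor_torus_line: "poly (torus_line_denom n s) x \<noteq> 0 \<Longrightarrow> torus_line n s x \<in> Tor n"
  by (auto simp: Tor_def torus_line_def poly_torus_line_denom)

lemma torus_line_0: "torus_line n s 0 = torus_one"
  by (auto simp: torus_line_def torus_one_def)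

lemma torus_line_1: "s \<in> Tor n \<Longrightarrow> torus_line n s 1 = s"
  by (auto simp: torus_line_def Tor_def)

lemma power_int_mult_power_shift:
  fixes a :: "'k::field"
  assumes "a \<noteq> 0" "nat (- m) \<le> N"
  shows "a powi m * a ^ N = a ^ nat (m + int N)"
proof -
  have "a powi m * a ^ N = a powi (m + int N)"
    using assms(1) by (simp add: power_int_add)
  also have "m + int N = int (nat (m + int N))" using assms(2) by simp
  finally show ?thesis by (simp only: power_int_of_nat)
qed

lemma chr_torus_line_mult_denom_power:
  assumes x: "poly (torus_line_denom n s) x \<noteq> 0" and N: "\<forall>j<n. nat (- m j) \<le> N"
  shows "chr n m (torus_line n s x) * poly (torus_line_denom n s) x ^ N
      = poly (\<Prod>j<n. [:1, s j - 1:] ^ nat (m j + int N)) x"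
proof -
  define q where "q j = [:1, s j - 1:]" for j
  have nz: "poly (q j) x \<noteq> 0" if "j < n" for j
    using x that by (auto simp: q_def poly_torus_line_denom)
  have "chr n m (torus_line n s x) * poly (torus_line_denom n s) x ^ N
      = (\<Prod>j<n. poly (q j) x powi m j * poly (q j) x ^ N)"
    by (simp add: chr_def torus_line_def torus_line_denom_def q_def poly_prod
        prod_power_distrib prod.distrib)
  also have "\<dots> = (\<Prod>j<n. poly (q j) x ^ nat (m j + int N))"
    by (rule prod.cong) (auto intro!: power_int_mult_power_shift nz N[rule_format])
  finally show ?thesis by (simp add: poly_prod q_def)
qed

text \<open>A power of the denominator clears the negative exponents.\<close>
lemma laurent_fun_along_torus_line:
  fixes L :: "(nat \<Rightarrow> 'k::field) \<Rightarrow> 'k"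
  assumes "laurent_fun n L"
  shows "\<exists>P N. \<forall>x. poly (torus_line_denom n s) x \<noteq> 0 \<longrightarrow>
     L (torus_line n s x) * poly (torus_line_denom n s) x ^ N = poly P x"
proof -
  obtain M c where M: "finite M" "M \<subseteq> Zvec n" "\<forall>s\<in>Tor n. L s = (\<Sum>m\<in>M. c m * chr n m s)"
    using assms unfolding laurent_fun_def by blast
  define N where "N = (\<Sum>m\<in>M. \<Sum>j<n. nat (- m j))"
  have N: "\<forall>j<n. nat (- m j) \<le> N" if "m \<in> M" for m
  proof (intro allI impI)
    fix j assume "j < n"
    then have "nat (- m j) \<le> (\<Sum>j<n. nat (- m j))" by (intro member_le_sum) auto
    also have "\<dots> \<le> N" unfolding N_def using that M(1) by (intro member_le_sum) auto
    finally show "nat (- m j) \<le> N" .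
  qed
  define P where
    "P = (\<Sum>m\<in>M. Polynomial.smult (c m) (\<Prod>j<n. [:1, s j - 1:] ^ nat (m j + int N)))"
  have "L (torus_line n s x) * poly (torus_line_denom n s) x ^ N = poly P x"
    if x: "poly (torus_line_denom n s) x \<noteq> 0" for x
  proof -
    have "L (torus_line n s x) * poly (torus_line_denom n s) x ^ N
        = (\<Sum>m\<in>M. c m * (chr n m (torus_line n s x) * poly (torus_line_denom n s) x ^ N))"
      using M(3) Tor_torus_line[OF x] by (simp add: sum_distrib_right mult.assoc)
    also have "\<dots> = poly P x"
      unfolding P_def poly_sum
      by (rule sum.cong) (simp_all add: chr_torus_line_mult_denom_power[OF x N])
    finally show ?thesis .
  qed
  then show ?thesis by blast
qed

lemma infinite_poly_nonroots:
  fixes Q :: "'k::field_char_0 poly"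
  assumes "Q \<noteq> 0"
  shows "infinite {x. poly Q x \<noteq> 0}"
proof
  assume "finite {x. poly Q x \<noteq> 0}"
  moreover have "finite {x. poly Q x = 0}"
    using assms by (rule poly_roots_finite)
  ultimately have "finite ({x. poly Q x \<noteq> 0} \<union> {x. poly Q x = 0})"
    by simp
  moreover have "{x. poly Q x \<noteq> 0} \<union> {x. poly Q x = 0} = UNIV" by blast
  ultimately show False using infinite_UNIV_char_0 by metis
qed

lemma zariski_closed_subset_GLV: "zariski_closed scale V C \<Longrightarrow> C \<subseteq> GLV scale V"
  unfolding zariski_closed_def by blast

lemma zariski_closed_pullback_rational_curve:
  fixes smult :: "'k::field_char_0 \<Rightarrow> 'a::ring_1 \<Rightarrow> 'a" and R :: "'k \<Rightarrow> 'a \<Rightarrow> 'a"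
  assumes rational: "\<And>p. polyV smult V p \<Longrightarrow>
      \<exists>F N. \<forall>x. poly Q x \<noteq> 0 \<longrightarrow> p (R x) * poly Q x ^ N = poly F x"
    and "zariski_closed smult V C"
    and x0: "poly Q x0 \<noteq> 0" "R x0 \<in> GLV smult V" "R x0 \<notin> C"
  shows "\<exists>F. F \<noteq> 0 \<and> (\<forall>x. poly Q x \<noteq> 0 \<longrightarrow> R x \<in> C \<longrightarrow> poly F x = 0)"
proof -
  obtain P where P: "\<forall>p\<in>P. polyV smult V p" "C = {g \<in> GLV smult V. \<forall>p\<in>P. p g = 0}"
    using \<open>zariski_closed smult V C\<close> unfolding zariski_closed_def by blast
  with x0(2,3) obtain p where p: "p \<in> P" "p (R x0) \<noteq> 0" by blast
  with P(1) rational obtain F N where F: "\<forall>x. poly Q x \<noteq> 0 \<longrightarrow> p (R x) * poly Q x ^ N = poly F x"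
    by blast
  have "F \<noteq> 0" using F p(2) x0(1) by force
  moreover have "poly F x = 0" if "poly Q x \<noteq> 0" "R x \<in> C" for x
  proof -
    from that(2) P(2) p(1) have "p (R x) = 0" by blast
    with F that(1) show ?thesis by force
  qed
  ultimately show ?thesis by blast
qed

text \<open>Two closed sets covering the image pull back to the zero sets of two nonzero polynomials
  covering the infinite parameter set.\<close>
lemma zariski_connected_rational_curve:
  fixes smult :: "'k::field_char_0 \<Rightarrow> 'a::ring_1 \<Rightarrow> 'a" and R :: "'k \<Rightarrow> 'a \<Rightarrow> 'a"
  assumes "Q \<noteq> 0"
    and rational: "\<And>p. polyV smult V p \<Longrightarrow>
      \<exists>F N. \<forall>x. poly Q x \<noteq> 0 \<longrightarrow> p (R x) * poly Q x ^ N = poly F x"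
  shows "zariski_connected smult V (R ` {x. poly Q x \<noteq> 0})"
  unfolding zariski_connected_def
proof (intro notI, elim exE conjE)
  let ?\<Lambda> = "{x. poly Q x \<noteq> 0}"
  fix C1 C2
  assume C1: "zariski_closed smult V C1" and C2: "zariski_closed smult V C2"
    and cover: "R ` ?\<Lambda> \<subseteq> C1 \<union> C2" and meet1: "R ` ?\<Lambda> \<inter> C1 \<noteq> {}"
    and meet2: "R ` ?\<Lambda> \<inter> C2 \<noteq> {}" and disjoint: "R ` ?\<Lambda> \<inter> C1 \<inter> C2 = {}"
  obtain x1 x2 where x1: "x1 \<in> ?\<Lambda>" "R x1 \<in> C1" and x2: "x2 \<in> ?\<Lambda>" "R x2 \<in> C2"
    using meet1 meet2 by blast
  have "poly Q x2 \<noteq> 0" using x2(1) by simp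
  moreover have "R x2 \<in> GLV smult V" using x2(2) zariski_closed_subset_GLV[OF C2] by blast
  moreover have "R x2 \<notin> C1" using x2 disjoint by blast
  ultimately have "\<exists>F. F \<noteq> 0 \<and> (\<forall>x. poly Q x \<noteq> 0 \<longrightarrow> R x \<in> C1 \<longrightarrow> poly F x = 0)"
    using zariski_closed_pullback_rational_curve[where R = R and Q = Q, OF rational C1] by blast
  then obtain F1 where F1: "F1 \<noteq> 0" "\<forall>x. poly Q x \<noteq> 0 \<longrightarrow> R x \<in> C1 \<longrightarrow> poly F1 x = 0"
    by blast
  have "poly Q x1 \<noteq> 0" using x1(1) by simp
  moreover have "R x1 \<in> GLV smult V" using x1(2) zariski_closed_subset_GLV[OF C1] by blast
  moreover have "R x1 \<notin> C2" using x1 disjoint by blast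
  ultimately have "\<exists>F. F \<noteq> 0 \<and> (\<forall>x. poly Q x \<noteq> 0 \<longrightarrow> R x \<in> C2 \<longrightarrow> poly F x = 0)"
    using zariski_closed_pullback_rational_curve[where R = R and Q = Q, OF rational C2] by blast
  then obtain F2 where F2: "F2 \<noteq> 0" "\<forall>x. poly Q x \<noteq> 0 \<longrightarrow> R x \<in> C2 \<longrightarrow> poly F2 x = 0"
    by blast
  have "?\<Lambda> \<subseteq> {x. poly (F1 * F2) x = 0}"
  proof
    fix x assume x: "x \<in> ?\<Lambda>"
    then have "R x \<in> C1 \<union> C2" using cover by blast
    with x F1(2) F2(2) show "x \<in> {x. poly (F1 * F2) x = 0}" by auto
  qed
  moreover have "finite {x. poly (F1 * F2) x = 0}"
    using F1(1) F2(1) by (simp add: poly_roots_finite)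
  ultimately show False
    using infinite_poly_nonroots[OF assms(1)] finite_subset by blast
qed

section \<open>Linear algebra\<close>

lemma finite_span_coordinates:
  fixes smult :: "'k::field_char_0 \<Rightarrow> 'a::ring_1 \<Rightarrow> 'a"
  assumes "vector_space smult" "finite B"
  obtains B0 coord where "finite B0" "\<And>b. b \<in> B0 \<Longrightarrow> lin_functional smult (coord b)"
    "\<And>x. x \<in> module.span smult B \<Longrightarrow> x = (\<Sum>b\<in>B0. smult (coord b x) b)"
proof -
  interpret vector_space smult by fact
  obtain B0 where B0: "B0 \<subseteq> B" "independent B0" "B \<subseteq> span B0"
    using maximal_independent_subset[of B] by blast
  from B0(1) assms(2) have "finite B0" by (rule finite_subset)
  from B0 have span_B0: "span B = span B0"
    using span_mono[OF B0(1)] span_minimal[OF B0(3)] by blast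
  \<comment> \<open>coordinates with respect to a basis of the whole algebra extending B0 are global functionals\<close>
  define E where "E = extend_basis B0"
  have E: "independent E" "span E = UNIV" "B0 \<subseteq> E"
    unfolding E_def using B0(2) independent_extend_basis span_extend_basis extend_basis_superset
    by auto
  define coord where "coord b x = representation E x b" for b x
  have lin: "lin_functional smult (coord b)" for b
    unfolding lin_functional_def coord_def using linear_representation[OF E(1,2)] .
  have rep: "representation E x = representation B0 x" if x: "x \<in> span B0" for x
  proof (rule representation_eqI[OF E(1)])
    show "x \<in> span E" using E(2) by simp
    show "representation B0 x b \<noteq> 0 \<Longrightarrow> b \<in> E" for b
      using representation_ne_zero E(3) by blast
    show "(\<Sum>b | representation B0 x b \<noteq> 0. smult (representation B0 x b) b) = x"
      by (rule sum_nonzero_representation_eq[OF B0(2) x])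
  qed (rule finite_representation)
  show ?thesis
  proof (rule that[OF \<open>finite B0\<close> lin])
    fix x assume "x \<in> span B"
    then have x: "x \<in> span B0" unfolding span_B0 .
    show "x = (\<Sum>b\<in>B0. smult (coord b x) b)"
      unfolding coord_def rep[OF x]
      using sum_representation_eq[OF B0(2) x \<open>finite B0\<close> order_refl] by simp
  qed
qed


definition zero_ext :: "'i set \<Rightarrow> ('i \<Rightarrow> 'a::zero) \<Rightarrow> 'i \<Rightarrow> 'a" where
  "zero_ext N d n = (if n \<in> N then d n else 0)"

lemma sum_zero_ext:
  fixes h :: "'i \<Rightarrow> 'a::zero \<Rightarrow> 'b::comm_monoid_add"
  assumes "finite J" "N \<subseteq> J" "\<And>n. h n 0 = 0"
  shows "(\<Sum>n\<in>J. h n (zero_ext N d n)) = (\<Sum>n\<in>N. h n (d n))"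
proof -
  have "(\<Sum>n\<in>J. h n (zero_ext N d n)) = (\<Sum>n\<in>J. if n \<in> N then h n (d n) else 0)"
    by (rule sum.cong) (auto simp: zero_ext_def assms(3))
  also have "\<dots> = (\<Sum>n\<in>J \<inter> N. h n (d n))" by (simp add: sum.inter_restrict[OF assms(1)])
  also have "J \<inter> N = N" using assms(2) by blast
  finally show ?thesis .
qed

lemma sum_zero_ext_id:
  fixes d :: "'i \<Rightarrow> 'a::comm_monoid_add"
  assumes "finite J" "N \<subseteq> J"
  shows "(\<Sum>n\<in>J. zero_ext N d n) = (\<Sum>n\<in>N. d n)"
  using sum_zero_ext[OF assms, of "\<lambda>n x. x"] by simp

lemma (in vector_space) span_UN_subspaces_eq_sums:
  assumes "\<And>i. i \<in> I \<Longrightarrow> subspace (F i)" "x \<in> span (\<Union>i\<in>I. F i)"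
  shows "\<exists>J d. finite J \<and> J \<subseteq> I \<and> (\<forall>i\<in>J. d i \<in> F i) \<and> x = (\<Sum>i\<in>J. d i)"
  using assms(2)
proof (induction rule: span_induct_alt)
  case base
  show ?case by (rule exI[of _ "{}"]) auto
next
  case (step c x y)
  obtain i0 where i0: "i0 \<in> I" "x \<in> F i0" using step.hyps(1) by blast
  obtain J d where J: "finite J" "J \<subseteq> I" "\<forall>i\<in>J. d i \<in> F i" "y = (\<Sum>i\<in>J. d i)"
    using step.IH by blast
  define d' where "d' = d(i0 := c *s x + zero_ext J d i0)"
  have "zero_ext J d i0 \<in> F i0"
    using J(3) subspace_0[OF assms(1)[OF i0(1)]] by (auto simp: zero_ext_def)
  then have "d' i0 \<in> F i0"
    unfolding d'_def
    using subspace_add[OF assms(1)[OF i0(1)]] subspace_scale[OF assms(1)[OF i0(1)] i0(2)]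
    by simp
  moreover have "(\<Sum>i\<in>insert i0 J. d' i) = c *s x + y"
  proof -
    have "(\<Sum>i\<in>insert i0 J. d' i) = d' i0 + (\<Sum>i\<in>J - {i0}. d i)"
      using J(1) by (simp add: sum.insert_remove d'_def)
    moreover have "y = zero_ext J d i0 + (\<Sum>i\<in>J - {i0}. d i)"
      using J(1,4) by (cases "i0 \<in> J") (auto simp: zero_ext_def sum.remove)
    ultimately show ?thesis by (simp add: d'_def add.assoc)
  qed
  ultimately show ?case
    using J i0 by (intro exI[of _ "insert i0 J"] exI[of _ d']) (auto simp: d'_def)
qed

lemma direct_sum_components_unique:
  fixes smult :: "'k::field_char_0 \<Rightarrow> 'a::ring_1 \<Rightarrow> 'a"
  assumes "vector_space smult" "is_direct_sum smult X G J"
    and subspace: "\<And>j. j \<in> J \<Longrightarrow> module.subspace smult (G j)"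
    and b: "finite K" "K \<subseteq> J" "\<forall>k\<in>K. b k \<in> G k"
    and b': "finite K'" "K' \<subseteq> J" "\<forall>k\<in>K'. b' k \<in> G k"
    and "(\<Sum>k\<in>K. b k) = (\<Sum>k\<in>K'. b' k)"
  shows "zero_ext K b n = zero_ext K' b' n"
proof (cases "n \<in> K \<union> K'")
  case True
  interpret vector_space smult by fact
  have independent: "\<And>K x. finite K \<Longrightarrow> K \<subseteq> J \<Longrightarrow> \<forall>k\<in>K. x k \<in> G k \<Longrightarrow>
      (\<Sum>k\<in>K. x k) = 0 \<Longrightarrow> \<forall>k\<in>K. x k = 0"
    using assms(2) unfolding is_direct_sum_def by blast
  have "\<forall>k\<in>K \<union> K'. zero_ext K b k - zero_ext K' b' k = 0"
  proof (rule independent)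
    show "finite (K \<union> K')" "K \<union> K' \<subseteq> J" using b b' by auto
    show "\<forall>k\<in>K \<union> K'. zero_ext K b k - zero_ext K' b' k \<in> G k"
    proof
      fix k assume "k \<in> K \<union> K'"
      then have sub: "subspace (G k)" using b b' subspace by blast
      have "zero_ext K b k \<in> G k" "zero_ext K' b' k \<in> G k"
        using b b' subspace_0[OF sub] by (auto simp: zero_ext_def)
      then show "zero_ext K b k - zero_ext K' b' k \<in> G k" using subspace_diff[OF sub] by blast
    qed
    show "(\<Sum>k\<in>K \<union> K'. zero_ext K b k - zero_ext K' b' k) = 0"
      using b b' assms(10) by (simp add: sum_subtractf sum_zero_ext_id)
  qed
  with True show ?thesis by simp
qed (simp add: zero_ext_def)

lemma direct_sum_coarsening_span:
  fixes smult :: "'k::field_char_0 \<Rightarrow> 'a::ring_1 \<Rightarrow> 'a"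
  assumes "vector_space smult"
    and F: "is_direct_sum smult UNIV F I" "\<And>i. i \<in> I \<Longrightarrow> module.subspace smult (F i)"
    and G: "is_direct_sum smult UNIV G J" "\<And>j. j \<in> J \<Longrightarrow> module.subspace smult (G j)"
    and phi: "\<And>i. i \<in> I \<Longrightarrow> phi i \<in> J" "\<And>i. i \<in> I \<Longrightarrow> F i \<subseteq> G (phi i)"
    and "n \<in> J" "a \<in> G n"
  shows "a \<in> module.span smult (\<Union>i\<in>{i \<in> I. phi i = n}. F i)"
proof -
  interpret vector_space smult by fact
  have "a \<in> span (\<Union>i\<in>I. F i)" using F(1) unfolding is_direct_sum_def by blast
  then obtain K x where K: "finite K" "K \<subseteq> I" "\<forall>i\<in>K. x i \<in> F i" "a = (\<Sum>i\<in>K. x i)"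
    using span_UN_subspaces_eq_sums[of I F a] F(2) by blast
  define b where "b j = (\<Sum>i\<in>{i\<in>K. phi i = j}. x i)" for j
  have b: "b j \<in> G j" if "j \<in> phi ` K" for j
  proof -
    from that obtain i0 where i0: "i0 \<in> K" "j = phi i0" by blast
    with K(2) phi(1) have "subspace (G j)" using G(2) by blast
    then show ?thesis
      unfolding b_def
    proof (rule subspace_sum)
      fix i assume i: "i \<in> {i \<in> K. phi i = j}"
      with K(2,3) have "x i \<in> F i" "i \<in> I" by auto
      with i phi(2) show "x i \<in> G j" by blast
    qed
  qed
  have "(\<Sum>j\<in>phi ` K. b j) = (\<Sum>j\<in>{n}. a)"
    unfolding b_def K(4) using sum.image_gen[OF K(1), symmetric] by simp
  then have "zero_ext (phi ` K) b n = zero_ext {n} (\<lambda>_. a) n"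
    using K phi(1) b \<open>a \<in> G n\<close> \<open>n \<in> J\<close>
    by (intro direct_sum_components_unique[OF assms(1) G]) auto
  then have "a = (if n \<in> phi ` K then b n else 0)"
    by (simp add: zero_ext_def)
  moreover have "b n \<in> span (\<Union>i\<in>{i \<in> I. phi i = n}. F i)"
    unfolding b_def using K by (intro span_sum span_base) auto
  ultimately show ?thesis
    by (simp add: span_zero)
qed

lemma direct_sum_coarsening:
  fixes smult :: "'k::field_char_0 \<Rightarrow> 'a::ring_1 \<Rightarrow> 'a"
  assumes "vector_space smult"
    and F: "is_direct_sum smult UNIV F I" "\<And>i. i \<in> I \<Longrightarrow> module.subspace smult (F i)"
    and G: "is_direct_sum smult UNIV G J" "\<And>j. j \<in> J \<Longrightarrow> module.subspace smult (G j)"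
    and phi: "\<And>i. i \<in> I \<Longrightarrow> phi i \<in> J" "\<And>i. i \<in> I \<Longrightarrow> F i \<subseteq> G (phi i)"
    and "n \<in> J"
  shows "is_direct_sum smult (G n) F {i \<in> I. phi i = n}"
  unfolding is_direct_sum_def
proof (intro conjI)
  interpret vector_space smult by fact
  show "G n = span (\<Union>i\<in>{i \<in> I. phi i = n}. F i)"
  proof
    show "span (\<Union>i\<in>{i \<in> I. phi i = n}. F i) \<subseteq> G n"
      by (rule span_minimal) (use phi G(2) \<open>n \<in> J\<close> in auto)
    show "G n \<subseteq> span (\<Union>i\<in>{i \<in> I. phi i = n}. F i)"
      using direct_sum_coarsening_span[OF assms] by blast
  qed
  show "\<forall>K x. finite K \<longrightarrow> K \<subseteq> {i \<in> I. phi i = n} \<longrightarrow> (\<forall>i\<in>K. x i \<in> F i)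
      \<longrightarrow> (\<Sum>i\<in>K. x i) = 0 \<longrightarrow> (\<forall>i\<in>K. x i = 0)"
    using F(1) unfolding is_direct_sum_def by blast
qed

lemma Aut_imp_inj: "f \<in> Aut scale \<Longrightarrow> inj f"
  by (simp add: Aut_def alg_aut_def bij_is_inj)

lemma Aut_imp_module_hom: "f \<in> Aut scale \<Longrightarrow> module_hom scale scale f"
  by (simp add: Aut_def alg_aut_def module_hom_iff_linear)

locale algebra_over =
  fixes smult :: "'k::field_char_0 \<Rightarrow> 'a::ring_1 \<Rightarrow> 'a"
  assumes algebra: "is_algebra smult"
begin

sublocale A: vector_space smult
  using algebra unfolding is_algebra_def by blast

lemma smult_mult_left: "smult c (x * y) = smult c x * y"
  using algebra unfolding is_algebra_def by blast

lemma smult_mult_right: "smult c (x * y) = x * smult c y"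
  using algebra unfolding is_algebra_def by blast

end

section \<open>The torus action defined by a grading\<close>

definition grading_decomp ::
    "((nat \<Rightarrow> int) \<Rightarrow> 'a::ring_1 set) \<Rightarrow> nat \<Rightarrow> 'a \<Rightarrow> (nat \<Rightarrow> int) set \<Rightarrow> ((nat \<Rightarrow> int) \<Rightarrow> 'a) \<Rightarrow> bool"
  where
  "grading_decomp Ag t a N d \<longleftrightarrow>
     finite N \<and> N \<subseteq> Zvec t \<and> (\<forall>n\<in>N. d n \<in> Ag n) \<and> a = (\<Sum>n\<in>N. d n)"

definition grading_action :: "('k::field \<Rightarrow> 'a::ring_1 \<Rightarrow> 'a) \<Rightarrow> nat \<Rightarrow>
    ((nat \<Rightarrow> int) \<Rightarrow> 'a set) \<Rightarrow> (nat \<Rightarrow> 'k) \<Rightarrow> 'a \<Rightarrow> 'a" where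
  "grading_action scale t Ag s a =
     (let (N, d) = SOME (N, d). grading_decomp Ag t a N d in \<Sum>n\<in>N. scale (chr t n s) (d n))"

locale graded_algebra = algebra_over smult
  for smult :: "'k::field_char_0 \<Rightarrow> 'a::ring_1 \<Rightarrow> 'a" +
  fixes t :: nat and Ag :: "(nat \<Rightarrow> int) \<Rightarrow> 'a set"
  assumes grading: "is_grading smult t Ag"
begin

abbreviation act :: "(nat \<Rightarrow> 'k) \<Rightarrow> 'a \<Rightarrow> 'a" where
  "act \<equiv> grading_action smult t Ag"

lemma grading_subspace: "n \<in> Zvec t \<Longrightarrow> A.subspace (Ag n)"
  using grading unfolding is_grading_def by blast

lemma grading_direct_sum: "is_direct_sum smult UNIV Ag (Zvec t)"
  using grading unfolding is_grading_def by blast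

lemma grading_mult:
  "n \<in> Zvec t \<Longrightarrow> n' \<in> Zvec t \<Longrightarrow> x \<in> Ag n \<Longrightarrow> y \<in> Ag n' \<Longrightarrow> x * y \<in> Ag (zvec_add n n')"
  using grading unfolding is_grading_def zvec_add_def by blast

lemma grading_decomp_exists: "\<exists>N d. grading_decomp Ag t a N d"
proof -
  have "a \<in> A.span (\<Union>n\<in>Zvec t. Ag n)"
    using grading_direct_sum unfolding is_direct_sum_def by blast
  then show ?thesis
    unfolding grading_decomp_def
    using A.span_UN_subspaces_eq_sums[of "Zvec t" Ag a] grading_subspace by blast
qed

lemma grading_decomp_unique:
  "grading_decomp Ag t a N d \<Longrightarrow> grading_decomp Ag t a N' d' \<Longrightarrow> zero_ext N d n = zero_ext N' d' n"
  unfolding grading_decomp_def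
  by (intro direct_sum_components_unique[OF A.vector_space_axioms grading_direct_sum grading_subspace])
     auto

lemma grading_action_eq:
  assumes "grading_decomp Ag t a N d"
  shows "act s a = (\<Sum>n\<in>N. smult (chr t n s) (d n))"
proof -
  obtain N' d' where some: "(SOME (N, d). grading_decomp Ag t a N d) = (N', d')"
    by fastforce
  have "\<exists>p. case_prod (grading_decomp Ag t a) p"
    using grading_decomp_exists by blast
  from someI_ex[OF this] have decomp': "grading_decomp Ag t a N' d'"
    unfolding some by simp
  then have fin: "finite (N \<union> N')"
    using assms unfolding grading_decomp_def by auto
  have "act s a = (\<Sum>n\<in>N'. smult (chr t n s) (d' n))"
    unfolding grading_action_def some by simp
  also have "\<dots> = (\<Sum>n\<in>N \<union> N'. smult (chr t n s) (zero_ext N' d' n))"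
    by (rule sum_zero_ext[OF fin, symmetric]) auto
  also have "\<dots> = (\<Sum>n\<in>N \<union> N'. smult (chr t n s) (zero_ext N d n))"
    using grading_decomp_unique[OF assms decomp'] by simp
  also have "\<dots> = (\<Sum>n\<in>N. smult (chr t n s) (d n))"
    by (rule sum_zero_ext[OF fin]) auto
  finally show ?thesis .
qed

lemma grading_action_homogeneous: "n \<in> Zvec t \<Longrightarrow> x \<in> Ag n \<Longrightarrow> act s x = smult (chr t n s) x"
  using grading_action_eq[of x "{n}" "\<lambda>_. x"] unfolding grading_decomp_def by auto

lemma grading_decomp_add:
  assumes "grading_decomp Ag t a N d" "grading_decomp Ag t b N' d'"
  shows "grading_decomp Ag t (a + b) (N \<union> N') (\<lambda>n. zero_ext N d n + zero_ext N' d' n)"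
  unfolding grading_decomp_def
proof (intro conjI ballI)
  show "finite (N \<union> N')" "N \<union> N' \<subseteq> Zvec t"
    using assms unfolding grading_decomp_def by auto
  fix n assume "n \<in> N \<union> N'"
  then have sub: "A.subspace (Ag n)"
    using assms unfolding grading_decomp_def by (auto intro: grading_subspace)
  have "zero_ext N d n \<in> Ag n" "zero_ext N' d' n \<in> Ag n"
    using assms A.subspace_0[OF sub] unfolding grading_decomp_def zero_ext_def by auto
  then show "zero_ext N d n + zero_ext N' d' n \<in> Ag n" using A.subspace_add[OF sub] by blast
next
  show "a + b = (\<Sum>n\<in>N \<union> N'. zero_ext N d n + zero_ext N' d' n)"
    using assms unfolding grading_decomp_def by (simp add: sum.distrib sum_zero_ext_id)
qed

lemma grading_decomp_scale:
  "grading_decomp Ag t a N d \<Longrightarrow> grading_decomp Ag t (smult c a) N (\<lambda>n. smult c (d n))"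
  using A.subspace_scale[OF grading_subspace]
  unfolding grading_decomp_def by (auto simp: A.scale_sum_right)

lemma grading_action_add: "act s (a + b) = act s a + act s b"
proof -
  obtain N d N' d' where a: "grading_decomp Ag t a N d" and b: "grading_decomp Ag t b N' d'"
    using grading_decomp_exists by meson
  have fin: "finite (N \<union> N')" using a b unfolding grading_decomp_def by auto
  have "act s (a + b) = (\<Sum>n\<in>N \<union> N'. smult (chr t n s) (zero_ext N d n + zero_ext N' d' n))"
    by (rule grading_action_eq[OF grading_decomp_add[OF a b]])
  also have "\<dots> = (\<Sum>n\<in>N \<union> N'. smult (chr t n s) (zero_ext N d n))
      + (\<Sum>n\<in>N \<union> N'. smult (chr t n s) (zero_ext N' d' n))"
    by (simp add: A.scale_right_distrib sum.distrib)
  also have "\<dots> = act s a + act s b"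
    using sum_zero_ext[OF fin, of N "\<lambda>n. smult (chr t n s)" d]
      sum_zero_ext[OF fin, of N' "\<lambda>n. smult (chr t n s)" d']
    by (simp add: grading_action_eq[OF a] grading_action_eq[OF b])
  finally show ?thesis .
qed

lemma grading_action_scale: "act s (smult c a) = smult c (act s a)"
proof -
  obtain N d where a: "grading_decomp Ag t a N d" using grading_decomp_exists by blast
  show ?thesis
    unfolding grading_action_eq[OF a] grading_action_eq[OF grading_decomp_scale[OF a]]
    by (simp add: A.scale_sum_right mult.commute)
qed

lemma grading_action_module_hom: "module_hom smult smult (act s)"
  by (simp add: module_hom_iff_linear Vector_Spaces.linear_iff A.vector_space_axioms
      grading_action_add grading_action_scale)

lemma grading_action_mult:
  assumes s: "s \<in> Tor t"
  shows "act s (a * b) = act s a * act s b"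
proof -
  obtain N d N' d' where a: "grading_decomp Ag t a N d" and b: "grading_decomp Ag t b N' d'"
    using grading_decomp_exists by meson
  have "a * b = (\<Sum>n\<in>N. \<Sum>n'\<in>N'. d n * d' n')"
    using a b unfolding grading_decomp_def by (simp add: sum_product)
  then have "act s (a * b) = (\<Sum>n\<in>N. \<Sum>n'\<in>N'. act s (d n * d' n'))"
    by (simp add: module_hom.sum[OF grading_action_module_hom])
  also have "\<dots> = (\<Sum>n\<in>N. \<Sum>n'\<in>N'. smult (chr t n s) (d n) * smult (chr t n' s) (d' n'))"
  proof (intro sum.cong refl)
    fix n n' assume "n \<in> N" "n' \<in> N'"
    then have hom: "n \<in> Zvec t" "n' \<in> Zvec t" "d n \<in> Ag n" "d' n' \<in> Ag n'"
      using a b unfolding grading_decomp_def by auto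
    have "act s (d n * d' n') = smult (chr t (zvec_add n n') s) (d n * d' n')"
      by (rule grading_action_homogeneous[OF Zvec_zvec_add[OF hom(1,2)] grading_mult[OF hom]])
    also have "\<dots> = smult (chr t n s) (d n) * smult (chr t n' s) (d' n')"
      by (simp add: chr_zvec_add[OF s] smult_mult_left mult.commute flip: smult_mult_right)
    finally show "act s (d n * d' n') = smult (chr t n s) (d n) * smult (chr t n' s) (d' n')" .
  qed
  also have "\<dots> = act s a * act s b"
    unfolding grading_action_eq[OF a] grading_action_eq[OF b] by (simp add: sum_product)
  finally show ?thesis .
qed

lemma grading_action_torus_mult: "act s (act u a) = act (torus_mult s u) a"
proof -
  obtain N d where a: "grading_decomp Ag t a N d" using grading_decomp_exists by blast
  have "grading_decomp Ag t (act u a) N (\<lambda>n. smult (chr t n u) (d n))"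
    using a A.subspace_scale[OF grading_subspace]
    unfolding grading_decomp_def grading_action_eq[OF a] by auto
  from grading_action_eq[OF this] show ?thesis
    unfolding grading_action_eq[OF a] by (simp add: chr_torus_mult mult.commute)
qed

lemma grading_action_torus_one: "act torus_one = id"
proof
  fix a
  obtain N d where a: "grading_decomp Ag t a N d" using grading_decomp_exists by blast
  then show "act torus_one a = id a"
    unfolding grading_action_eq[OF a] grading_decomp_def by simp
qed

lemma grading_action_torus_inverse: "s \<in> Tor t \<Longrightarrow> act s (act (torus_inverse s) a) = a"
  by (simp add: grading_action_torus_mult torus_mult_inverse_right grading_action_torus_one)

lemma grading_action_Aut:
  assumes s: "s \<in> Tor t"
  shows "act s \<in> Aut smult"
  unfolding Aut_def alg_aut_def
proof (intro CollectI conjI allI)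
  have "act s \<circ> act (torus_inverse s) = id" "act (torus_inverse s) \<circ> act s = id"
    using grading_action_torus_inverse[OF s]
      grading_action_torus_inverse[OF Tor_torus_inverse[OF s]]
    by (auto simp: torus_inverse_def)
  then show bij: "bij (act s)"
    using o_bij by blast
  show "Vector_Spaces.linear smult smult (act s)"
    using grading_action_module_hom by (simp add: module_hom_iff_linear)
  show mult: "act s (x * y) = act s x * act s y" for x y
    by (rule grading_action_mult[OF s])
  obtain y where y: "act s y = 1" using bij by (metis bij_pointE)
  have "act s 1 * act s y = act s y" using mult[of 1 y] by simp
  with y show "act s 1 = 1" by simp
qed

lemma laurent_fun_grading_action:
  assumes "lin_functional smult lam"
  shows "laurent_fun t (\<lambda>s. lam (act s v))"
proof -
  obtain N d where v: "grading_decomp Ag t v N d" using grading_decomp_exists by blast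
  have lam: "module_hom smult (*) lam"
    using assms unfolding lin_functional_def by (simp add: module_hom_iff_linear)
  show ?thesis
  proof (rule laurent_fun_image_sum[of N id t _ "\<lambda>n. lam (d n)"])
    show "finite N" "id ` N \<subseteq> Zvec t" using v unfolding grading_decomp_def by auto
    show "\<forall>s\<in>Tor t. lam (act s v) = (\<Sum>n\<in>N. lam (d n) * chr t (id n) s)"
      unfolding grading_action_eq[OF v]
      by (simp add: module_hom.sum[OF lam] module_hom.scale[OF lam] mult.commute)
  qed
qed

lemma eigenvector_in_grading_component:
  assumes n: "n \<in> Zvec t" and eigen: "\<forall>s\<in>Tor t. act s a = smult (chr t n s) a"
  shows "a \<in> Ag n"
proof -
  obtain N d where a: "grading_decomp Ag t a N d" using grading_decomp_exists by blast
  have fin: "finite (insert n N)" "insert n N \<subseteq> Zvec t"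
    using a n unfolding grading_decomp_def by auto
  \<comment> \<open>comparing the two expansions of act s a, Dedekind's lemma forces zero_ext N d = a at n\<close>
  have "zero_ext N d n - zero_ext {n} (\<lambda>_. a) n = 0"
  proof (rule chr_independent[OF A.vector_space_axioms fin _ insertI1,
        where w = "\<lambda>k. zero_ext N d k - zero_ext {n} (\<lambda>_. a) k"])
    show "\<forall>s\<in>Tor t. (\<Sum>k\<in>insert n N. smult (chr t k s) (zero_ext N d k - zero_ext {n} (\<lambda>_. a) k)) = 0"
    proof
      fix s :: "nat \<Rightarrow> 'k" assume s: "s \<in> Tor t"
      have "(\<Sum>k\<in>insert n N. smult (chr t k s) (zero_ext N d k - zero_ext {n} (\<lambda>_. a) k))
          = (\<Sum>k\<in>insert n N. smult (chr t k s) (zero_ext N d k))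
            - (\<Sum>k\<in>insert n N. smult (chr t k s) (zero_ext {n} (\<lambda>_. a) k))"
        by (simp add: A.scale_right_diff_distrib sum_subtractf)
      also have "\<dots> = act s a - smult (chr t n s) a"
        using sum_zero_ext[OF fin(1) subset_insertI, of "\<lambda>k. smult (chr t k s)" d]
          sum_zero_ext[OF fin(1), of "{n}" "\<lambda>k. smult (chr t k s)" "\<lambda>_. a"]
        by (simp add: grading_action_eq[OF a])
      finally show "(\<Sum>k\<in>insert n N. smult (chr t k s) (zero_ext N d k - zero_ext {n} (\<lambda>_. a) k)) = 0"
        using eigen s by simp
    qed
  qed
  then have "a = zero_ext N d n" by (simp add: zero_ext_def)
  moreover have "zero_ext N d n \<in> Ag n"
    using a A.subspace_0[OF grading_subspace[OF n]] unfolding grading_decomp_def zero_ext_def by auto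
  ultimately show ?thesis by simp
qed

end

section \<open>The canonical grading\<close>

locale few_aut_torus = algebra_over smult
  for smult :: "'k::field_char_0 \<Rightarrow> 'a::ring_1 \<Rightarrow> 'a" +
  fixes V :: "'a set" and r :: nat and tau :: "(nat \<Rightarrow> 'k) \<Rightarrow> 'a \<Rightarrow> 'a"
  assumes few_aut: "few_aut_V smult V"
    and torus: "torus_iso smult V r tau"
begin

lemma Aut_preserves_V: "f \<in> Aut smult \<Longrightarrow> x \<in> V \<Longrightarrow> f x \<in> V"
  using few_aut unfolding few_aut_V_def by blast

lemma tau_Aut: "s \<in> Tor r \<Longrightarrow> tau s \<in> Aut smult"
  using torus unfolding torus_iso_def bij_betw_def Aut0_def by blast

lemma tau_torus_mult: "s \<in> Tor r \<Longrightarrow> u \<in> Tor r \<Longrightarrow> tau (torus_mult s u) = tau s \<circ> tau u"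
  using torus unfolding torus_iso_def torus_mult_def by blast

lemma tau_torus_one: "tau torus_one = id"
proof
  fix x
  have "tau torus_one = tau torus_one \<circ> tau torus_one"
    using tau_torus_mult[OF Tor_torus_one Tor_torus_one] by simp
  then have "tau torus_one (tau torus_one x) = tau torus_one x" by (metis comp_apply)
  then show "tau torus_one x = id x"
    using Aut_imp_inj[OF tau_Aut[OF Tor_torus_one]] by (simp add: inj_eq)
qed

lemma tau_torus_inverse: "s \<in> Tor r \<Longrightarrow> tau s (tau (torus_inverse s) x) = x"
  using tau_torus_mult[OF _ Tor_torus_inverse] torus_mult_inverse_right tau_torus_one
  by (metis comp_apply id_apply)

text \<open>The matrix coefficients of the inverse of G s are those of G (torus_inverse s).\<close>
lemma laurent_fun_regV_action:
  fixes G :: "(nat \<Rightarrow> 'k) \<Rightarrow> 'a \<Rightarrow> 'a"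
  assumes Aut: "\<And>s. s \<in> Tor n \<Longrightarrow> G s \<in> Aut smult"
    and inverse: "\<And>s x. s \<in> Tor n \<Longrightarrow> G s (G (torus_inverse s) x) = x"
    and coeff: "\<And>v lam. v \<in> V \<Longrightarrow> lin_functional smult lam \<Longrightarrow> laurent_fun n (\<lambda>s. lam (G s v))"
    and "regV smult V q"
  shows "laurent_fun n (\<lambda>s. q (restrict (G s) V))"
proof (rule laurent_fun_regV[OF \<open>regV smult V q\<close> coeff])
  fix v lam assume v: "v \<in> V" and lam: "lin_functional smult lam"
  from coeff[OF v lam] have "laurent_fun n (\<lambda>s. lam (G (torus_inverse s) v))"
    by (rule laurent_fun_torus_inverse)
  then show "laurent_fun n (\<lambda>s. lam (inv_into V (restrict (G s) V) v))"
  proof (rule laurent_fun_cong)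
    fix s :: "nat \<Rightarrow> 'k" assume s: "s \<in> Tor n"
    have "inv_into V (restrict (G s) V) v = G (torus_inverse s) v"
      using Aut_imp_inj[OF Aut[OF s]] v Aut_preserves_V[OF Aut[OF Tor_torus_inverse[OF s]] v]
        inverse[OF s]
      by (rule inv_into_restrict_eq)
    then show "lam (G (torus_inverse s) v) = lam (inv_into V (restrict (G s) V) v)" by simp
  qed
qed (assumption+)

lemma laurent_fun_regV_tau: "regV smult V q \<Longrightarrow> laurent_fun r (\<lambda>s. q (restrict (tau s) V))"
  by (rule laurent_fun_regV_action[where G = tau and n = r, OF tau_Aut tau_torus_inverse])
     (use torus in \<open>auto simp: torus_iso_def\<close>)

lemma canon_comp_subspace: "A.subspace (canon_comp smult r tau m)"
  using module_hom.zero[OF Aut_imp_module_hom[OF tau_Aut]]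
    module_hom.add[OF Aut_imp_module_hom[OF tau_Aut]]
    module_hom.scale[OF Aut_imp_module_hom[OF tau_Aut]]
  by (auto simp: A.subspace_def canon_comp_def A.scale_right_distrib mult.commute)

lemma orbit_vector_laurent_fun: "vector_laurent_fun smult r (\<lambda>s. tau s a)"
proof -
  obtain W where W: "a \<in> W" "fin_dim_subspace smult W" "\<forall>f\<in>Aut smult. f ` W \<subseteq> W"
    "\<forall>w\<in>W. \<forall>mu. lin_functional smult mu \<longrightarrow>
       (\<exists>q. regV smult V q \<and> (\<forall>f\<in>Aut smult. mu (f w) = q (restrict f V)))"
    using few_aut unfolding few_aut_V_def by blast
  obtain B where "finite B" "W = A.span B"
    using W(2) unfolding fin_dim_subspace_def by blast
  then obtain B0 coord where B0: "finite B0" "\<And>b. b \<in> B0 \<Longrightarrow> lin_functional smult (coord b)"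
    "\<And>x. x \<in> W \<Longrightarrow> x = (\<Sum>b\<in>B0. smult (coord b x) b)"
    using finite_span_coordinates[OF A.vector_space_axioms] by metis
  have "laurent_fun r (\<lambda>s. coord b (tau s a))" if b: "b \<in> B0" for b
  proof -
    obtain q where q: "regV smult V q" "\<forall>f\<in>Aut smult. coord b (f a) = q (restrict f V)"
      using W(1,4) B0(2)[OF b] by blast
    show ?thesis
      by (rule laurent_fun_cong[OF laurent_fun_regV_tau[OF q(1)]]) (use q(2) tau_Aut in auto)
  qed
  then have "vector_laurent_fun smult r (\<lambda>s. \<Sum>b\<in>B0. smult (coord b (tau s a)) b)"
    by (intro A.vector_laurent_fun_sum[OF B0(1)] A.vector_laurent_fun_scale)
  then show ?thesis
  proof (rule vector_laurent_fun_cong)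
    fix s :: "nat \<Rightarrow> 'k" assume "s \<in> Tor r"
    then have "tau s a \<in> W" using W(1,3) tau_Aut by blast
    then show "(\<Sum>b\<in>B0. smult (coord b (tau s a)) b) = tau s a" by (rule B0(3)[symmetric])
  qed
qed

text \<open>Translate the expansion by u and compare coefficients by Dedekind's lemma.\<close>
lemma orbit_expansion_coeff_in_canon_comp:
  assumes M: "finite M" "M \<subseteq> Zvec r" and m: "m \<in> M"
    and orbit: "\<forall>s\<in>Tor r. tau s a = (\<Sum>m\<in>M. smult (chr r m s) (w m))"
  shows "w m \<in> canon_comp smult r tau m"
  unfolding canon_comp_def
proof (intro CollectI ballI)
  fix u :: "nat \<Rightarrow> 'k" assume u: "u \<in> Tor r"
  have hom: "module_hom smult smult (tau u)" by (rule Aut_imp_module_hom[OF tau_Aut[OF u]])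
  have "tau u (w m) - smult (chr r m u) (w m) = 0"
  proof (rule chr_independent[OF A.vector_space_axioms M _ m,
        where w = "\<lambda>m. tau u (w m) - smult (chr r m u) (w m)"])
    show "\<forall>s\<in>Tor r. (\<Sum>m\<in>M. smult (chr r m s) (tau u (w m) - smult (chr r m u) (w m))) = 0"
    proof
      fix s :: "nat \<Rightarrow> 'k" assume s: "s \<in> Tor r"
      have "(\<Sum>m\<in>M. smult (chr r m s) (tau u (w m))) = tau u (tau s a)"
        using orbit s by (simp add: module_hom.sum[OF hom] module_hom.scale[OF hom])
      also have "\<dots> = tau (torus_mult u s) a" using tau_torus_mult[OF u s] by simp
      also have "\<dots> = (\<Sum>m\<in>M. smult (chr r m s) (smult (chr r m u) (w m)))"
        using orbit Tor_torus_mult[OF u s] by (simp add: chr_torus_mult mult.commute)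
      finally show "(\<Sum>m\<in>M. smult (chr r m s) (tau u (w m) - smult (chr r m u) (w m))) = 0"
        by (simp add: A.scale_right_diff_distrib sum_subtractf)
    qed
  qed
  then show "tau u (w m) = smult (chr r m u) (w m)" by simp
qed

lemma canon_comp_span: "a \<in> A.span (\<Union>m\<in>Zvec r. canon_comp smult r tau m)"
proof -
  obtain M w where M: "finite M" "M \<subseteq> Zvec r"
    and orbit: "\<forall>s\<in>Tor r. tau s a = (\<Sum>m\<in>M. smult (chr r m s) (w m))"
    using orbit_vector_laurent_fun[of a] unfolding vector_laurent_fun_def by blast
  have "a = tau torus_one a" by (simp add: tau_torus_one)
  also have "\<dots> = (\<Sum>m\<in>M. w m)" using orbit[rule_format, OF Tor_torus_one] by simp
  also have "\<dots> \<in> A.span (\<Union>m\<in>Zvec r. canon_comp smult r tau m)"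
  proof (intro A.span_sum A.span_base)
    fix m assume "m \<in> M"
    then have "w m \<in> canon_comp smult r tau m" "m \<in> Zvec r"
      using orbit_expansion_coeff_in_canon_comp[OF M _ orbit] M(2) by auto
    then show "w m \<in> (\<Union>m\<in>Zvec r. canon_comp smult r tau m)" by blast
  qed
  finally show ?thesis .
qed

lemma canon_comp_independent:
  assumes J: "finite J" "J \<subseteq> Zvec r" "\<forall>m\<in>J. x m \<in> canon_comp smult r tau m"
    and "(\<Sum>m\<in>J. x m) = 0"
  shows "\<forall>m\<in>J. x m = 0"
proof -
  have "(\<Sum>m\<in>J. smult (chr r m s) (x m)) = 0" if s: "s \<in> Tor r" for s
  proof -
    have hom: "module_hom smult smult (tau s)" by (rule Aut_imp_module_hom[OF tau_Aut[OF s]])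
    have "(\<Sum>m\<in>J. smult (chr r m s) (x m)) = (\<Sum>m\<in>J. tau s (x m))"
      using J(3) s by (simp add: canon_comp_def)
    also have "\<dots> = tau s (\<Sum>m\<in>J. x m)" by (simp add: module_hom.sum[OF hom])
    finally show ?thesis using \<open>(\<Sum>m\<in>J. x m) = 0\<close> by (simp add: module_hom.zero[OF hom])
  qed
  then show ?thesis
    using chr_independent[OF A.vector_space_axioms J(1,2)] by blast
qed

lemma canonical_direct_sum: "is_direct_sum smult UNIV (canon_comp smult r tau) (Zvec r)"
  unfolding is_direct_sum_def using canon_comp_span canon_comp_independent by blast

end

section \<open>Comparison of a grading with the canonical grading\<close>

locale few_aut_graded = few_aut_torus smult V r tau + graded_algebra smult t Ag
  for smult :: "'k::field_char_0 \<Rightarrow> 'a::ring_1 \<Rightarrow> 'a" and V r tau t Ag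
begin

lemma laurent_fun_regV_grading_action:
  "regV smult V q \<Longrightarrow> laurent_fun t (\<lambda>s. q (restrict (act s) V))"
  by (rule laurent_fun_regV_action[where G = act and n = t, OF grading_action_Aut
        grading_action_torus_inverse laurent_fun_grading_action])

text \<open>The line from the identity to s in the torus (k^x)^t is mapped by the grading action onto
  a connected subset of the image of Aut A containing the identity and the action of s.\<close>
lemma grading_action_AutV0:
  assumes s: "s \<in> Tor t"
  shows "restrict (act s) V \<in> AutV0 smult V"
proof -
  let ?Q = "torus_line_denom t s"
  let ?R = "\<lambda>x. restrict (act (torus_line t s x)) V"
  have "zariski_connected smult V (?R ` {x. poly ?Q x \<noteq> 0})"
  proof (rule zariski_connected_rational_curve[OF torus_line_denom_nonzero])
    fix p assume "polyV smult V p"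
    from laurent_fun_regV_grading_action[OF polyV_imp_regV[OF this]]
    show "\<exists>F N. \<forall>x. poly ?Q x \<noteq> 0 \<longrightarrow> p (?R x) * poly ?Q x ^ N = poly F x"
      by (rule laurent_fun_along_torus_line)
  qed
  moreover have "?R ` {x. poly ?Q x \<noteq> 0} \<subseteq> AutV smult V"
    unfolding AutV_def using grading_action_Aut Tor_torus_line by blast
  moreover have "restrict id V \<in> ?R ` {x. poly ?Q x \<noteq> 0}"
  proof
    show "restrict id V = ?R 0" by (simp add: torus_line_0 grading_action_torus_one)
    show "0 \<in> {x. poly ?Q x \<noteq> 0}" by (simp add: poly_torus_line_denom)
  qed
  moreover have "restrict (act s) V \<in> ?R ` {x. poly ?Q x \<noteq> 0}"
  proof
    show "restrict (act s) V = ?R 1" by (simp add: torus_line_1[OF s])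
    show "1 \<in> {x. poly ?Q x \<noteq> 0}" using s by (simp add: poly_torus_line_denom Tor_def)
  qed
  ultimately show ?thesis unfolding AutV0_def by blast
qed

lemma grading_action_Aut0: "s \<in> Tor t \<Longrightarrow> act s \<in> Aut0 smult V"
  unfolding Aut0_def using grading_action_Aut grading_action_AutV0 by blast

definition torus_hom :: "(nat \<Rightarrow> 'k) \<Rightarrow> nat \<Rightarrow> 'k" where
  "torus_hom s = inv_into (Tor r) tau (act s)"

lemma inj_on_tau: "inj_on tau (Tor r)"
  using torus unfolding torus_iso_def bij_betw_def by blast

lemma Tor_torus_hom: "s \<in> Tor t \<Longrightarrow> torus_hom s \<in> Tor r"
  using torus grading_action_Aut0 unfolding torus_hom_def torus_iso_def bij_betw_def
  by (metis inv_into_into)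

lemma tau_torus_hom: "s \<in> Tor t \<Longrightarrow> tau (torus_hom s) = act s"
  using torus grading_action_Aut0 unfolding torus_hom_def torus_iso_def bij_betw_def
  by (metis f_inv_into_f)

lemma torus_hom_mult:
  assumes s: "s \<in> Tor t" and u: "u \<in> Tor t"
  shows "torus_hom (torus_mult s u) = torus_mult (torus_hom s) (torus_hom u)"
proof (rule inj_onD[OF inj_on_tau])
  have "tau (torus_hom (torus_mult s u)) = act s \<circ> act u"
    using tau_torus_hom[OF Tor_torus_mult[OF s u]] by (auto simp: grading_action_torus_mult)
  also have "\<dots> = tau (torus_mult (torus_hom s) (torus_hom u))"
    using tau_torus_mult Tor_torus_hom tau_torus_hom s u by simp
  finally show "tau (torus_hom (torus_mult s u)) = tau (torus_mult (torus_hom s) (torus_hom u))" .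
qed (use Tor_torus_mult Tor_torus_hom s u in auto)

lemma torus_hom_one: "torus_hom torus_one = torus_one"
proof (rule inj_onD[OF inj_on_tau])
  show "tau (torus_hom torus_one) = tau torus_one"
    using tau_torus_hom[OF Tor_torus_one] grading_action_torus_one tau_torus_one by simp
qed (use Tor_torus_hom Tor_torus_one in auto)

text \<open>The coordinates of torus_hom are regular on the image of Aut A, hence Laurent polynomials
  on (k^x)^t, hence monomials.\<close>
lemma torus_hom_coordinate_chr:
  assumes "i < r"
  shows "\<exists>n\<in>Zvec t. \<forall>s\<in>Tor t. torus_hom s i = chr t n s"
proof (rule multiplicative_laurent_fun_is_chr)
  obtain q where q: "regV smult V q" "\<forall>u\<in>Tor r. u i = q (restrict (tau u) V)"
    using torus assms unfolding torus_iso_def by blast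
  show "laurent_fun t (\<lambda>s. torus_hom s i)"
  proof (rule laurent_fun_cong[OF laurent_fun_regV_grading_action[OF q(1)]])
    fix s :: "nat \<Rightarrow> 'k" assume "s \<in> Tor t"
    then show "q (restrict (act s) V) = torus_hom s i"
      using q(2) Tor_torus_hom tau_torus_hom by metis
  qed
  show "\<forall>s\<in>Tor t. \<forall>u\<in>Tor t. torus_hom (torus_mult s u) i = torus_hom s i * torus_hom u i"
    using torus_hom_mult by (simp add: torus_mult_def)
  show "torus_hom torus_one i = 1"
    using torus_hom_one by (simp add: torus_one_def)
qed

lemma canon_comp_subset_grading:
  obtains phi where "group_hom_Z r t phi"
    "\<And>m. m \<in> Zvec r \<Longrightarrow> canon_comp smult r tau m \<subseteq> Ag (phi m)"
proof -
  obtain Phi where Phi: "\<And>i. i < r \<Longrightarrow> Phi i \<in> Zvec t \<and> (\<forall>s\<in>Tor t. torus_hom s i = chr t (Phi i) s)"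
    using torus_hom_coordinate_chr by metis
  let ?phi = "zvec_linear_map r Phi"
  have hom: "group_hom_Z r t ?phi"
    using Phi by (intro group_hom_Z_zvec_linear_map) blast
  have subset: "canon_comp smult r tau m \<subseteq> Ag (?phi m)" if m: "m \<in> Zvec r" for m
  proof
    fix a assume a: "a \<in> canon_comp smult r tau m"
    show "a \<in> Ag (?phi m)"
    proof (rule eigenvector_in_grading_component)
      show "?phi m \<in> Zvec t" using hom m unfolding group_hom_Z_def by blast
      show "\<forall>s\<in>Tor t. act s a = smult (chr t (?phi m) s) a"
      proof
        fix s :: "nat \<Rightarrow> 'k" assume s: "s \<in> Tor t"
        have "chr r m (torus_hom s) = chr r m (\<lambda>i. chr t (Phi i) s)"
          unfolding chr_def by (rule prod.cong) (use Phi s in \<open>auto simp: chr_def\<close>)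
        then have "chr r m (torus_hom s) = chr t (?phi m) s"
          using chr_chr_zvec_linear_map[OF s] by simp
        moreover have "act s a = smult (chr r m (torus_hom s)) a"
          using a Tor_torus_hom[OF s] tau_torus_hom[OF s] by (auto simp: canon_comp_def)
        ultimately show "act s a = smult (chr t (?phi m) s) a" by simp
      qed
    qed
  qed
  show ?thesis by (rule that[OF hom subset])
qed

end

theorem theorem2p2:
  fixes smult :: "'k::field_char_0 \<Rightarrow> 'a::ring_1 \<Rightarrow> 'a"
    and V :: "'a set" and r t :: nat
    and tau :: "(nat \<Rightarrow> 'k) \<Rightarrow> ('a \<Rightarrow> 'a)"
    and Ag :: "(nat \<Rightarrow> int) \<Rightarrow> 'a set"
  assumes "is_algebra smult"
    and "few_aut_V smult V"
    and "torus_iso smult V r tau"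
    and "is_grading smult t Ag"
  shows "\<exists>phi. group_hom_Z r t phi \<and>
           (\<forall>n\<in>Zvec t. is_direct_sum smult (Ag n) (canon_comp smult r tau)
                          {m \<in> Zvec r. phi m = n})"
proof -
  interpret few_aut_graded smult V r tau t Ag
    using assms by unfold_locales
  obtain phi where hom: "group_hom_Z r t phi"
    and subset: "\<And>m. m \<in> Zvec r \<Longrightarrow> canon_comp smult r tau m \<subseteq> Ag (phi m)"
    using canon_comp_subset_grading by blast
  have "is_direct_sum smult (Ag n) (canon_comp smult r tau) {m \<in> Zvec r. phi m = n}"
    if "n \<in> Zvec t" for n
    using hom unfolding group_hom_Z_def
    by (intro direct_sum_coarsening[OF A.vector_space_axioms canonical_direct_sum canon_comp_subspace
          grading_direct_sum grading_subspace _ subset that]) blast+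
  with hom show ?thesis by blast
qed

end
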